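(* The assignment $\Gamma$ is a functor from the category $\mathfrak{B}$ of Bochvar algebras (with homomorphisms) to the category $\mathfrak{S}$ of Bochvar systems. It sends a Bochvar algebra $\mathbf{A}$ to $\mathbb{B}_{\mathbf{A}}$, and a homomorphism $f:\mathbf{A}_1\to\mathbf{A}_2$ to its restriction to the bottom fibre of $\mathbf{A}_1$. In particular, this restriction maps the bottom fibre of $\mathbf{A}_1$ into the bottom fibre of $\mathbf{A}_2$ and is a morphism of Bochvar systems $\mathbb{B}_{\mathbf{A}_1}\to\mathbb{B}_{\mathbf{A}_2}$.
   Context: $\mathbf{WK}^e$ is the three-element algebra on $\{0,\tfrac12,1\}$ of type $\langle\wedge,\vee,\neg,J_2,0,1\rangle$. Its operations are: - $\neg$ swaps $0,1$ and fixes $\tfrac12$; - $\wedge,\vee$ are Boolean on $\{0,1\}$ and return $\tfrac12$ if some argument is $\tfrac12$; - $J_2(1)=1$ and $J_2(\tfrac12)=J_2(0)=0$. Bochvar algebras are the members of $ISP(\mathbf{WK}^e)$. The $\{\wedge,\vee,\neg,0,1\}$-reduct of a Bochvar algebra is canonically a Płonka sum of Boolean algebras $\mathbf{A}_i$ over a join-semilattice $\langle I,\vee,i_0\rangle$; the bottom fibre is $\mathbf{A}_{i_0}$. A Bochvar system is a pair $\langle\mathbf{B},\mathbf{I}\rangle$ with $\mathbf{B}$ a Boolean algebra and $I\subseteq B$ containing $1$ and closed under $\wedge$. A morphism $\langle\mathbf{B}_1,\mathbf{I}_1\rangle\to\langle\mathbf{B}_2,\mathbf{I}_2\rangle$ is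 a Boolean homomorphism $g$ with $g(I_1)\subseteq I_2$. $\mathbb{B}_{\mathbf{A}}=\langle\mathbf{A}_{i_0},K\rangle$ with $K=\{J_2(1^{A_i}):i\in I\}$, where $1^{A_i}$ is the top of fibre $\mathbf{A}_i$. *)

theory Defs
  imports "HOL-Library.FuncSet"
begin

datatype wk = W0 | Wh | W1   (* W0 = 0, Wh = 1/2, W1 = 1 *)

fun wk_neg :: "wk \<Rightarrow> wk" where
  "wk_neg W0 = W1" | "wk_neg Wh = Wh" | "wk_neg W1 = W0"

definition wk_meet :: "wk \<Rightarrow> wk \<Rightarrow> wk" where
  "wk_meet x y = (if x = Wh \<or> y = Wh then Wh else if x = W1 \<and> y = W1 then W1 else W0)"

definition wk_join :: "wk \<Rightarrow> wk \<Rightarrow> wk" where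
  "wk_join x y = (if x = Wh \<or> y = Wh then Wh else if x = W1 \<or> y = W1 then W1 else W0)"

definition wk_J2 :: "wk \<Rightarrow> wk" where
  "wk_J2 x = (if x = W1 then W1 else W0)"

record 'a balg =
  car :: "'a set"
  meet :: "'a \<Rightarrow> 'a \<Rightarrow> 'a"
  join :: "'a \<Rightarrow> 'a \<Rightarrow> 'a"
  neg :: "'a \<Rightarrow> 'a"
  jtwo :: "'a \<Rightarrow> 'a"
  zero :: "'a"
  one :: "'a"

definition is_algebra :: "'a balg \<Rightarrow> bool" where
  "is_algebra A \<longleftrightarrow>
     zero A \<in> car A \<and> one A \<in> car A \<and>
     (\<forall>x\<in>car A. \<forall>y\<in>car A. meet A x y \<in> car A \<and> join A x y \<in> car A) \<and>
     (\<forall>x\<in>car A. neg A x \<in> car A \<and> jtwo A x \<in> car A)"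

definition is_hom :: "'a balg \<Rightarrow> 'b balg \<Rightarrow> ('a \<Rightarrow> 'b) \<Rightarrow> bool" where
  "is_hom A B h \<longleftrightarrow>
     h \<in> car A \<rightarrow> car B \<and>
     (\<forall>x\<in>car A. \<forall>y\<in>car A. h (meet A x y) = meet B (h x) (h y)
                           \<and> h (join A x y) = join B (h x) (h y)) \<and>
     (\<forall>x\<in>car A. h (neg A x) = neg B (h x) \<and> h (jtwo A x) = jtwo B (h x)) \<and>
     h (zero A) = zero B \<and> h (one A) = one B"

definition wk_power :: "'i set \<Rightarrow> ('i \<Rightarrow> wk) balg" where
  "wk_power X = \<lparr> car = {f. \<forall>i. i \<notin> X \<longrightarrow> f i = W0},
     meet = (\<lambda>f g i. if i \<in> X then wk_meet (f i) (g i) else W0),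
     join = (\<lambda>f g i. if i \<in> X then wk_join (f i) (g i) else W0),
     neg = (\<lambda>f i. if i \<in> X then wk_neg (f i) else W0),
     jtwo = (\<lambda>f i. if i \<in> X then wk_J2 (f i) else W0),
     zero = (\<lambda>i. W0),
     one = (\<lambda>i. if i \<in> X then W1 else W0) \<rparr>"

text \<open>Bochvar algebras: members of ISP(WK^e), i.e. algebras embeddable
  (injective homomorphism) into a direct power of WK^e.  The index set is
  taken of type \<open>('a \<Rightarrow> wk) set\<close>; this loses no generality, since any embedding
  into a power yields one into the power indexed by the homomorphisms A \<rightarrow> WK^e.\<close>

definition bochvar_algebra :: "'a balg \<Rightarrow> bool" where
  "bochvar_algebra A \<longleftrightarrow> is_algebra A \<and>
     (\<exists>(X :: ('a \<Rightarrow> wk) set) h. is_hom A (wk_power X) h \<and> inj_on h (car A))"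

text \<open>In the canonical Plonka decomposition of the reduct, the index of b is
  below the index of a iff a \<or> (b \<and> \<not>b) = a.  Two elements lie in the same
  fibre iff their indices coincide.\<close>

definition fibre_le :: "'a balg \<Rightarrow> 'a \<Rightarrow> 'a \<Rightarrow> bool" where
  "fibre_le A b a \<longleftrightarrow> join A a (meet A b (neg A b)) = a"

definition fibre :: "'a balg \<Rightarrow> 'a \<Rightarrow> 'a set" where
  "fibre A a = {b \<in> car A. fibre_le A a b \<and> fibre_le A b a}"

definition bottom_fibre :: "'a balg \<Rightarrow> 'a set" where
  "bottom_fibre A = fibre A (zero A)"

definition fibre_top :: "'a balg \<Rightarrow> 'a \<Rightarrow> 'a" where
  "fibre_top A a = join A a (neg A a)"

record 'a boolalg =
  bcar :: "'a set"
  bmeet :: "'a \<Rightarrow> 'a \<Rightarrow> 'a"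
  bjoin :: "'a \<Rightarrow> 'a \<Rightarrow> 'a"
  bneg :: "'a \<Rightarrow> 'a"
  bzero :: "'a"
  bone :: "'a"

definition boolean_algebra_on :: "'a boolalg \<Rightarrow> bool" where
  "boolean_algebra_on B \<longleftrightarrow>
     bzero B \<in> bcar B \<and> bone B \<in> bcar B \<and>
     (\<forall>x\<in>bcar B. bneg B x \<in> bcar B) \<and>
     (\<forall>x\<in>bcar B. \<forall>y\<in>bcar B. bmeet B x y \<in> bcar B \<and> bjoin B x y \<in> bcar B) \<and>
     (\<forall>x\<in>bcar B. \<forall>y\<in>bcar B. bmeet B x y = bmeet B y x \<and> bjoin B x y = bjoin B y x) \<and>
     (\<forall>x\<in>bcar B. \<forall>y\<in>bcar B. \<forall>z\<in>bcar B.
         bmeet B x (bmeet B y z) = bmeet B (bmeet B x y) z \<and>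
         bjoin B x (bjoin B y z) = bjoin B (bjoin B x y) z \<and>
         bmeet B x (bjoin B y z) = bjoin B (bmeet B x y) (bmeet B x z) \<and>
         bjoin B x (bmeet B y z) = bmeet B (bjoin B x y) (bjoin B x z)) \<and>
     (\<forall>x\<in>bcar B. \<forall>y\<in>bcar B. bmeet B x (bjoin B x y) = x \<and> bjoin B x (bmeet B x y) = x) \<and>
     (\<forall>x\<in>bcar B. bmeet B x (bneg B x) = bzero B \<and> bjoin B x (bneg B x) = bone B)"

definition boolean_hom :: "'a boolalg \<Rightarrow> 'b boolalg \<Rightarrow> ('a \<Rightarrow> 'b) \<Rightarrow> bool" where
  "boolean_hom B1 B2 g \<longleftrightarrow>
     g \<in> bcar B1 \<rightarrow> bcar B2 \<and>
     (\<forall>x\<in>bcar B1. \<forall>y\<in>bcar B1. g (bmeet B1 x y) = bmeet B2 (g x) (g y)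
                              \<and> g (bjoin B1 x y) = bjoin B2 (g x) (g y)) \<and>
     (\<forall>x\<in>bcar B1. g (bneg B1 x) = bneg B2 (g x)) \<and>
     g (bzero B1) = bzero B2 \<and> g (bone B1) = bone B2"

definition bochvar_system :: "'a boolalg \<Rightarrow> 'a set \<Rightarrow> bool" where
  "bochvar_system B I \<longleftrightarrow> boolean_algebra_on B \<and> I \<subseteq> bcar B \<and> bone B \<in> I \<and>
     (\<forall>x\<in>I. \<forall>y\<in>I. bmeet B x y \<in> I)"

definition bochvar_system_hom ::
  "'a boolalg \<Rightarrow> 'a set \<Rightarrow> 'b boolalg \<Rightarrow> 'b set \<Rightarrow> ('a \<Rightarrow> 'b) \<Rightarrow> bool" where
  "bochvar_system_hom B1 I1 B2 I2 g \<longleftrightarrow> boolean_hom B1 B2 g \<and> g ` I1 \<subseteq> I2"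

definition Gamma_alg :: "'a balg \<Rightarrow> 'a boolalg" where
  "Gamma_alg A = \<lparr> bcar = bottom_fibre A, bmeet = meet A, bjoin = join A,
                   bneg = neg A, bzero = zero A, bone = one A \<rparr>"

definition Gamma_K :: "'a balg \<Rightarrow> 'a set" where
  "Gamma_K A = {jtwo A (fibre_top A a) | a. a \<in> car A}"

definition Gamma_mor :: "'a balg \<Rightarrow> ('a \<Rightarrow> 'b) \<Rightarrow> ('a \<Rightarrow> 'b)" where
  "Gamma_mor A f = restrict f (bottom_fibre A)"

end

theory Submission
  imports Defs
begin

text \<open>Embed A into a power of WK^e. An element lies in the bottom fibre exactly when none of
  its coordinates is 1/2, and on \<open>{0, 1}\<close> the operations of WK^e are Boolean, so the bottom
  fibre is a Boolean algebra. Since \<open>J\<^sub>2\<close> never returns 1/2, K lies in the bottom fibre,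
  and K is closed under meets because, coordinatewise,
  \<open>J\<^sub>2(a \<or> \<not>a) \<and> J\<^sub>2(b \<or> \<not>b) = J\<^sub>2((a \<and> b) \<or> \<not>(a \<and> b))\<close>.
  Conversely, the fibre order, the fibre tops and \<open>J\<^sub>2\<close> are given by terms, so every
  homomorphism maps the bottom fibre and K into those of its codomain.\<close>

lemma wk_neq_Wh_iff: "a \<noteq> Wh \<longleftrightarrow> a = W0 \<or> a = W1"
  by (cases a) auto

lemma wk_neg_eq_Wh_iff [simp]: "wk_neg a = Wh \<longleftrightarrow> a = Wh"
  by (cases a) auto

lemma wk_meet_eq_Wh_iff [simp]: "wk_meet a b = Wh \<longleftrightarrow> a = Wh \<or> b = Wh"
  and wk_join_eq_Wh_iff [simp]: "wk_join a b = Wh \<longleftrightarrow> a = Wh \<or> b = Wh"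
  and wk_J2_neq_Wh [simp]: "wk_J2 a \<noteq> Wh"
  by (auto simp: wk_meet_def wk_join_def wk_J2_def)

lemma is_algebra_closed:
  assumes "is_algebra A"
  shows "zero A \<in> car A" "one A \<in> car A"
    "x \<in> car A \<Longrightarrow> y \<in> car A \<Longrightarrow> meet A x y \<in> car A"
    "x \<in> car A \<Longrightarrow> y \<in> car A \<Longrightarrow> join A x y \<in> car A"
    "x \<in> car A \<Longrightarrow> neg A x \<in> car A"
    "x \<in> car A \<Longrightarrow> jtwo A x \<in> car A"
  using assms unfolding is_algebra_def by auto

lemma is_homD:
  assumes "is_hom A B f"
  shows "x \<in> car A \<Longrightarrow> f x \<in> car B"
    "x \<in> car A \<Longrightarrow> y \<in> car A \<Longrightarrow> f (meet A x y) = meet B (f x) (f y)"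
    "x \<in> car A \<Longrightarrow> y \<in> car A \<Longrightarrow> f (join A x y) = join B (f x) (f y)"
    "x \<in> car A \<Longrightarrow> f (neg A x) = neg B (f x)"
    "x \<in> car A \<Longrightarrow> f (jtwo A x) = jtwo B (f x)"
    "f (zero A) = zero B" "f (one A) = one B"
  using assms unfolding is_hom_def by auto

lemma hom_fibre_le:
  assumes "is_hom A B f" "is_algebra A" "a \<in> car A" "b \<in> car A" "fibre_le A b a"
  shows "fibre_le B (f b) (f a)"
proof -
  have "fibre_le B (f b) (f a) \<longleftrightarrow> f (join A a (meet A b (neg A b))) = f a"
    using assms(1-4) by (simp add: fibre_le_def is_homD is_algebra_closed)
  with assms(5) show ?thesis
    by (simp add: fibre_le_def)
qed

lemma hom_image_fibre:
  assumes "is_hom A B f" "is_algebra A" "a \<in> car A"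
  shows "f ` fibre A a \<subseteq> fibre B (f a)"
  using assms hom_fibre_le[OF assms(1,2)] by (auto simp: fibre_def is_homD)

lemma hom_image_bottom_fibre:
  assumes "is_hom A B f" "is_algebra A"
  shows "f ` bottom_fibre A \<subseteq> bottom_fibre B"
  using hom_image_fibre[OF assms is_algebra_closed(1)[OF assms(2)]] assms(1)
  by (simp add: bottom_fibre_def is_homD)

lemma hom_fibre_top:
  assumes "is_hom A B f" "is_algebra A" "a \<in> car A"
  shows "f (fibre_top A a) = fibre_top B (f a)"
  using assms by (simp add: fibre_top_def is_homD is_algebra_closed)

lemma hom_image_Gamma_K:
  assumes "is_hom A B f" "is_algebra A"
  shows "f ` Gamma_K A \<subseteq> Gamma_K B"
proof
  fix y assume "y \<in> f ` Gamma_K A"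
  then obtain a where a: "a \<in> car A" and y: "y = f (jtwo A (fibre_top A a))"
    unfolding Gamma_K_def by blast
  have "fibre_top A a \<in> car A"
    using a assms(2) by (simp add: fibre_top_def is_algebra_closed)
  then have "y = jtwo B (fibre_top B (f a))"
    using y a assms by (simp add: is_homD hom_fibre_top)
  then show "y \<in> Gamma_K B"
    using a assms(1) unfolding Gamma_K_def by (blast dest: is_homD(1))
qed

lemma bottom_fibre_carD: "b \<in> bottom_fibre A \<Longrightarrow> b \<in> car A"
  by (simp add: bottom_fibre_def fibre_def)

lemma Gamma_mor_boolean_hom:
  assumes "is_hom A B f" "is_algebra A" "boolean_algebra_on (Gamma_alg A)"
  shows "boolean_hom (Gamma_alg A) (Gamma_alg B) (Gamma_mor A f)"
proof -
  have closed: "x \<in> bottom_fibre A \<Longrightarrow> y \<in> bottom_fibre A \<Longrightarrow>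
      meet A x y \<in> bottom_fibre A \<and> join A x y \<in> bottom_fibre A"
    "x \<in> bottom_fibre A \<Longrightarrow> neg A x \<in> bottom_fibre A"
    "zero A \<in> bottom_fibre A" "one A \<in> bottom_fibre A" for x y
    using assms(3) unfolding boolean_algebra_on_def Gamma_alg_def by auto
  show ?thesis
    using closed hom_image_bottom_fibre[OF assms(1,2)] assms(1)
    unfolding boolean_hom_def Gamma_alg_def Gamma_mor_def
    by (auto simp: is_homD bottom_fibre_carD)
qed

lemma Gamma_mor_bochvar_system_hom:
  assumes "is_hom A B f" "is_algebra A" "bochvar_system (Gamma_alg A) (Gamma_K A)"
  shows "bochvar_system_hom (Gamma_alg A) (Gamma_K A) (Gamma_alg B) (Gamma_K B) (Gamma_mor A f)"
proof -
  have "Gamma_K A \<subseteq> bottom_fibre A"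
    using assms(3) by (simp add: bochvar_system_def Gamma_alg_def)
  then have "Gamma_mor A f ` Gamma_K A \<subseteq> Gamma_K B"
    using hom_image_Gamma_K[OF assms(1,2)] unfolding Gamma_mor_def by auto
  then show ?thesis
    using assms Gamma_mor_boolean_hom
    unfolding bochvar_system_hom_def bochvar_system_def by auto
qed

lemma Gamma_mor_comp:
  assumes "f ` bottom_fibre A \<subseteq> bottom_fibre B"
  shows "Gamma_mor A (g \<circ> f) = compose (bottom_fibre A) (Gamma_mor B g) (Gamma_mor A f)"
  using assms by (auto simp: Gamma_mor_def compose_def fun_eq_iff)

locale wk_embedding =
  fixes A :: "'a balg" and X :: "'i set" and h :: "'a \<Rightarrow> 'i \<Rightarrow> wk"
  assumes algebra: "is_algebra A"
    and hom: "is_hom A (wk_power X) h"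
    and inj: "inj_on h (car A)"
begin

lemmas car_closed [simp] = is_algebra_closed[OF algebra]

lemma h_zero [simp]: "h (zero A) i = W0"
  and h_one [simp]: "i \<in> X \<Longrightarrow> h (one A) i = W1"
  and h_meet [simp]: "x \<in> car A \<Longrightarrow> y \<in> car A \<Longrightarrow> i \<in> X \<Longrightarrow> h (meet A x y) i = wk_meet (h x i) (h y i)"
  and h_join [simp]: "x \<in> car A \<Longrightarrow> y \<in> car A \<Longrightarrow> i \<in> X \<Longrightarrow> h (join A x y) i = wk_join (h x i) (h y i)"
  and h_neg [simp]: "x \<in> car A \<Longrightarrow> i \<in> X \<Longrightarrow> h (neg A x) i = wk_neg (h x i)"
  and h_jtwo [simp]: "x \<in> car A \<Longrightarrow> i \<in> X \<Longrightarrow> h (jtwo A x) i = wk_J2 (h x i)"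
  using hom by (simp_all add: is_hom_def wk_power_def)

lemma eq_by_coordinates:
  assumes "x \<in> car A" "y \<in> car A" "\<And>i. i \<in> X \<Longrightarrow> h x i = h y i"
  shows "x = y"
proof -
  have "h z i = W0" if "z \<in> car A" "i \<notin> X" for z i
    using hom that unfolding is_hom_def wk_power_def by auto
  then have "h x = h y"
    using assms by (metis ext)
  then show ?thesis
    using inj assms(1,2) by (simp add: inj_on_def)
qed

lemma bottom_fibre_iff: "b \<in> bottom_fibre A \<longleftrightarrow> b \<in> car A \<and> (\<forall>i\<in>X. h b i \<noteq> Wh)"
proof
  assume b: "b \<in> bottom_fibre A"
  then have "b \<in> car A" and "join A (zero A) (meet A b (neg A b)) = zero A"
    unfolding bottom_fibre_def fibre_def fibre_le_def by auto
  then have "h (join A (zero A) (meet A b (neg A b))) i \<noteq> Wh" if "i \<in> X" for i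
    by simp
  with \<open>b \<in> car A\<close> show "b \<in> car A \<and> (\<forall>i\<in>X. h b i \<noteq> Wh)"
    by simp
next
  assume b: "b \<in> car A \<and> (\<forall>i\<in>X. h b i \<noteq> Wh)"
  have "join A b (meet A (zero A) (neg A (zero A))) = b"
    and "join A (zero A) (meet A b (neg A b)) = zero A"
    using b by (auto intro!: eq_by_coordinates simp: wk_neq_Wh_iff wk_meet_def wk_join_def)
  with b show "b \<in> bottom_fibre A"
    unfolding bottom_fibre_def fibre_def fibre_le_def by auto
qed

lemma bottom_fibre_coordinate_cases:
  "b \<in> bottom_fibre A \<Longrightarrow> i \<in> X \<Longrightarrow> h b i = W0 \<or> h b i = W1"
  by (simp add: bottom_fibre_iff flip: wk_neq_Wh_iff)

lemma bottom_fibre_closed: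
  "x \<in> bottom_fibre A \<Longrightarrow> y \<in> bottom_fibre A \<Longrightarrow> meet A x y \<in> bottom_fibre A"
  "x \<in> bottom_fibre A \<Longrightarrow> y \<in> bottom_fibre A \<Longrightarrow> join A x y \<in> bottom_fibre A"
  "x \<in> bottom_fibre A \<Longrightarrow> neg A x \<in> bottom_fibre A"
  "zero A \<in> bottom_fibre A" "one A \<in> bottom_fibre A"
  by (simp_all add: bottom_fibre_iff)

lemma boolean_algebra_bottom_fibre: "boolean_algebra_on (Gamma_alg A)"
  unfolding boolean_algebra_on_def Gamma_alg_def
proof (intro conjI ballI eq_by_coordinates)
qed (auto simp: bottom_fibre_closed bottom_fibre_carD wk_meet_def wk_join_def
    dest: bottom_fibre_coordinate_cases)

lemma Gamma_K_subset_bottom_fibre: "Gamma_K A \<subseteq> bottom_fibre A"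
  by (auto simp: Gamma_K_def fibre_top_def bottom_fibre_iff)

lemma one_in_Gamma_K: "one A \<in> Gamma_K A"
proof -
  have "one A = jtwo A (fibre_top A (one A))"
    by (rule eq_by_coordinates) (simp_all add: fibre_top_def wk_J2_def wk_join_def)
  then show ?thesis
    unfolding Gamma_K_def using car_closed(2) by blast
qed

lemma jtwo_fibre_top_meet:
  assumes "a \<in> car A" "b \<in> car A"
  shows "meet A (jtwo A (fibre_top A a)) (jtwo A (fibre_top A b)) = jtwo A (fibre_top A (meet A a b))"
proof (rule eq_by_coordinates)
  fix i assume "i \<in> X"
  then show "h (meet A (jtwo A (fibre_top A a)) (jtwo A (fibre_top A b))) i
      = h (jtwo A (fibre_top A (meet A a b))) i"
    using assms
    by (cases "h a i"; cases "h b i"; simp add: fibre_top_def wk_J2_def wk_join_def wk_meet_def)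
qed (use assms in \<open>simp_all add: fibre_top_def\<close>)

lemma Gamma_K_meet_closed: "x \<in> Gamma_K A \<Longrightarrow> y \<in> Gamma_K A \<Longrightarrow> meet A x y \<in> Gamma_K A"
  unfolding Gamma_K_def by (auto simp: jtwo_fibre_top_meet)

lemma bochvar_system_Gamma: "bochvar_system (Gamma_alg A) (Gamma_K A)"
  using boolean_algebra_bottom_fibre Gamma_K_subset_bottom_fibre one_in_Gamma_K Gamma_K_meet_closed
  unfolding bochvar_system_def by (simp add: Gamma_alg_def)

end

lemma bochvar_algebra_imp_bochvar_system:
  assumes "bochvar_algebra A"
  shows "bochvar_system (Gamma_alg A) (Gamma_K A)"
proof -
  from assms obtain X :: "('a \<Rightarrow> wk) set" and h where "wk_embedding A X h"
    unfolding bochvar_algebra_def wk_embedding_def by blast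
  then show ?thesis
    by (rule wk_embedding.bochvar_system_Gamma)
qed

theorem lemma3p7:
  fixes A1 :: "'a balg" and A2 :: "'b balg" and A3 :: "'c balg"
    and f :: "'a \<Rightarrow> 'b" and g :: "'b \<Rightarrow> 'c"
  assumes "bochvar_algebra A1" and "bochvar_algebra A2" and "bochvar_algebra A3"
    and "is_hom A1 A2 f" and "is_hom A2 A3 g"
  shows "bochvar_system (Gamma_alg A1) (Gamma_K A1)
    \<and> f ` bottom_fibre A1 \<subseteq> bottom_fibre A2
    \<and> bochvar_system_hom (Gamma_alg A1) (Gamma_K A1) (Gamma_alg A2) (Gamma_K A2) (Gamma_mor A1 f)
    \<and> Gamma_mor A1 (\<lambda>x. x) = restrict (\<lambda>x. x) (bcar (Gamma_alg A1))
    \<and> Gamma_mor A1 (g \<circ> f) = compose (bottom_fibre A1) (Gamma_mor A2 g) (Gamma_mor A1 f)"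
proof -
  have alg: "is_algebra A1"
    using assms(1) unfolding bochvar_algebra_def by blast
  have system: "bochvar_system (Gamma_alg A1) (Gamma_K A1)"
    using assms(1) by (rule bochvar_algebra_imp_bochvar_system)
  have bottom: "f ` bottom_fibre A1 \<subseteq> bottom_fibre A2"
    using assms(4) alg by (rule hom_image_bottom_fibre)
  show ?thesis
    using system bottom Gamma_mor_bochvar_system_hom[OF assms(4) alg system] Gamma_mor_comp[OF bottom]
    by (simp add: Gamma_mor_def Gamma_alg_def)
qed

end
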